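(* Let $(A,\Delta,\Delta')$ be a commutative Hopf brace over a field $k$, with antipodes $S$ (for $\Delta$) and $T$ (for $\Delta'$). Define $\rho(a)=a_{(-1)}\otimes a_{(0)}:=S(a_1)a_{21'}\otimes a_{22'}$ and $\varphi(a)=a_{[0]}\otimes a_{[1]}:=T(a_{1'})_{(-1)}a_{2'}\otimes T(a_{1'})_{(0)}a_{3'}$ for $a\in A$. Then the map $$c:A\otimes A\to A\otimes A,\qquad c(x\otimes y)=x_{(-1)}y_{[0]}\otimes x_{(0)}y_{[1]}$$ is a solution of the braid equation $(c\otimes\mathrm{id})(\mathrm{id}\otimes c)(c\otimes\mathrm{id})=(\mathrm{id}\otimes c)(c\otimes\mathrm{id})(\mathrm{id}\otimes c)$ on $A\otimes A\otimes A$.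
   Context: All objects are over a field $k$. A Hopf brace $(A,\Delta,\Delta')$ consists of an algebra $(A,m,1)$ with two Hopf algebra structures $(A,m,1,\Delta,\varepsilon,S)$ and $(A,m,1,\Delta',\epsilon,T)$ on the same algebra such that for all $h\in A$: $h_{1'}\otimes h_{2'1}\otimes h_{2'2}=h_{11'}S(h_2)h_{31'}\otimes h_{12'}\otimes h_{32'}$. It is commutative if $A$ is commutative. Sweedler notation: $\Delta(h)=h_1\otimes h_2$, $\Delta'(h)=h_{1'}\otimes h_{2'}$, iterated $\Delta'$ written $h_{1'}\otimes h_{2'}\otimes h_{3'}$; $h_{21'}$ means $\Delta'$ applied to $h_2$. *)

theory Defs
  imports Main "HOL.Vector_Spaces"
begin

text \<open>Tensors over a field k are represented by formal finite sums (lists) of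
pure tensors.  Two formal sums are equal as elements of the tensor product
iff all products of linear functionals agree on them (linear functionals
separate tensor products of vector spaces).\<close>

type_synonym 'a tens2 = "('a \<times> 'a) list"
type_synonym 'a tens3 = "('a \<times> 'a \<times> 'a) list"

definition lin_fun :: "('k::field \<Rightarrow> 'a::ab_group_add \<Rightarrow> 'a) \<Rightarrow> ('a \<Rightarrow> 'k) \<Rightarrow> bool" where
  "lin_fun sc f \<longleftrightarrow> Vector_Spaces.linear sc (*) f"

definition eq2 :: "('k::field \<Rightarrow> 'a::ab_group_add \<Rightarrow> 'a) \<Rightarrow> 'a tens2 \<Rightarrow> 'a tens2 \<Rightarrow> bool" where
  "eq2 sc t u \<longleftrightarrow> (\<forall>f g. lin_fun sc f \<longrightarrow> lin_fun sc g \<longrightarrow>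
      sum_list [f a * g b. (a,b) \<leftarrow> t] = sum_list [f a * g b. (a,b) \<leftarrow> u])"

definition eq3 :: "('k::field \<Rightarrow> 'a::ab_group_add \<Rightarrow> 'a) \<Rightarrow> 'a tens3 \<Rightarrow> 'a tens3 \<Rightarrow> bool" where
  "eq3 sc t u \<longleftrightarrow> (\<forall>f g h. lin_fun sc f \<longrightarrow> lin_fun sc g \<longrightarrow> lin_fun sc h \<longrightarrow>
      sum_list [f a * g b * h c. (a,b,c) \<leftarrow> t] = sum_list [f a * g b * h c. (a,b,c) \<leftarrow> u])"

definition k_algebra :: "('k::field \<Rightarrow> 'a::comm_ring_1 \<Rightarrow> 'a) \<Rightarrow> bool" where
  "k_algebra sc \<longleftrightarrow> vector_space sc \<and> (\<forall>c x y. sc c (x * y) = sc c x * y)"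

text \<open>Hopf algebra structure (D = comultiplication, e = counit, S = antipode)
on the algebra ('a, *, 1) over k.  D x is any representative of \<Delta>(x).\<close>

definition hopf_algebra ::
  "('k::field \<Rightarrow> 'a::comm_ring_1 \<Rightarrow> 'a) \<Rightarrow> ('a \<Rightarrow> 'a tens2) \<Rightarrow> ('a \<Rightarrow> 'k) \<Rightarrow> ('a \<Rightarrow> 'a) \<Rightarrow> bool" where
  "hopf_algebra sc D e S \<longleftrightarrow>
     k_algebra sc \<and>
     \<comment> \<open>D is k-linear\<close>
     (\<forall>x y. eq2 sc (D (x + y)) (D x @ D y)) \<and>
     (\<forall>c x. eq2 sc (D (sc c x)) [(sc c a, b). (a,b) \<leftarrow> D x]) \<and>
     \<comment> \<open>coassociativity\<close>
     (\<forall>x. eq3 sc [(a1, a2, b). (a,b) \<leftarrow> D x, (a1,a2) \<leftarrow> D a]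
                  [(a, b1, b2). (a,b) \<leftarrow> D x, (b1,b2) \<leftarrow> D b]) \<and>
     \<comment> \<open>counit\<close>
     lin_fun sc e \<and>
     (\<forall>x. sum_list [sc (e a) b. (a,b) \<leftarrow> D x] = x) \<and>
     (\<forall>x. sum_list [sc (e b) a. (a,b) \<leftarrow> D x] = x) \<and>
     \<comment> \<open>D and e are algebra maps\<close>
     (\<forall>x y. eq2 sc (D (x * y)) [(a * c, b * d). (a,b) \<leftarrow> D x, (c,d) \<leftarrow> D y]) \<and>
     eq2 sc (D 1) [(1, 1)] \<and>
     (\<forall>x y. e (x * y) = e x * e y) \<and> e 1 = 1 \<and>
     \<comment> \<open>antipode\<close>
     Vector_Spaces.linear sc sc S \<and>
     (\<forall>x. sum_list [S a * b. (a,b) \<leftarrow> D x] = sc (e x) 1) \<and>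
     (\<forall>x. sum_list [a * S b. (a,b) \<leftarrow> D x] = sc (e x) 1)"

text \<open>Hopf brace (A, \<Delta>, \<Delta>'): two Hopf algebra structures on the same algebra with
 h1' \<otimes> h2'1 \<otimes> h2'2 = h11' S(h2) h31' \<otimes> h12' \<otimes> h32'.
Commutativity of A is built into the type class comm_ring_1.\<close>

definition hopf_brace ::
  "('k::field \<Rightarrow> 'a::comm_ring_1 \<Rightarrow> 'a) \<Rightarrow> ('a \<Rightarrow> 'a tens2) \<Rightarrow> ('a \<Rightarrow> 'k) \<Rightarrow> ('a \<Rightarrow> 'a)
    \<Rightarrow> ('a \<Rightarrow> 'a tens2) \<Rightarrow> ('a \<Rightarrow> 'k) \<Rightarrow> ('a \<Rightarrow> 'a) \<Rightarrow> bool" where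
  "hopf_brace sc D e S D' e' T \<longleftrightarrow>
     hopf_algebra sc D e S \<and> hopf_algebra sc D' e' T \<and>
     (\<forall>h. eq3 sc
        [(a, b1, b2). (a,b) \<leftarrow> D' h, (b1,b2) \<leftarrow> D b]
        [(p1 * S q * r1, p2, r2). (u,r) \<leftarrow> D h, (p,q) \<leftarrow> D u,
                                  (p1,p2) \<leftarrow> D' p, (r1,r2) \<leftarrow> D' r])"

definition brace_rho :: "('a::comm_ring_1 \<Rightarrow> 'a tens2) \<Rightarrow> ('a \<Rightarrow> 'a) \<Rightarrow> ('a \<Rightarrow> 'a tens2) \<Rightarrow> 'a \<Rightarrow> 'a tens2" where
  "brace_rho D S D' x = [(S p * r, s). (p,q) \<leftarrow> D x, (r,s) \<leftarrow> D' q]"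

definition brace_phi :: "('a::comm_ring_1 \<Rightarrow> 'a tens2) \<Rightarrow> ('a \<Rightarrow> 'a) \<Rightarrow> ('a \<Rightarrow> 'a tens2) \<Rightarrow> ('a \<Rightarrow> 'a) \<Rightarrow> 'a \<Rightarrow> 'a tens2" where
  "brace_phi D S D' T y = [(m * u2, n * v). (u,v) \<leftarrow> D' y, (u1,u2) \<leftarrow> D' u, (m,n) \<leftarrow> brace_rho D S D' (T u1)]"

definition brace_c :: "('a::comm_ring_1 \<Rightarrow> 'a tens2) \<Rightarrow> ('a \<Rightarrow> 'a) \<Rightarrow> ('a \<Rightarrow> 'a tens2) \<Rightarrow> ('a \<Rightarrow> 'a) \<Rightarrow> 'a \<Rightarrow> 'a \<Rightarrow> 'a tens2" where
  "brace_c D S D' T x y = [(m * p, n * q). (m,n) \<leftarrow> brace_rho D S D' x, (p,q) \<leftarrow> brace_phi D S D' T y]"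

definition c_id :: "('a \<Rightarrow> 'a \<Rightarrow> 'a tens2) \<Rightarrow> 'a tens3 \<Rightarrow> 'a tens3" where
  "c_id c t = [(a, b, z). (x,y,z) \<leftarrow> t, (a,b) \<leftarrow> c x y]"

definition id_c :: "('a \<Rightarrow> 'a \<Rightarrow> 'a tens2) \<Rightarrow> 'a tens3 \<Rightarrow> 'a tens3" where
  "id_c c t = [(x, a, b). (x,y,z) \<leftarrow> t, (a,b) \<leftarrow> c y z]"

end

(*
  For a commutative k-algebra R, the algebra maps A -> R ("points") form a group under the
  convolution of either Hopf structure, the inverse of f being f o S resp. f o T, and the Hopf
  brace compatibility says precisely that the points form a skew brace (G, *, o), with * the
  convolution for Delta and o the one for Delta'.  Every skew brace solves the braid equation
  set-theoretically by r(a, b) = (lam a b, sig a b), where lam a b = a^-1 * (a o b) and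
  sig a b = (lam a b)^-1 o a o b (inverse for o).  The maps rho and phi are the coordinate
  expressions of lam and sig: for points f, g, summing f m * g n over rho(x) gives lam f g x, and
  over phi(y) gives sig f g y.  Hence c (x) id and id (x) c act on tensors as r12 and r23 act on
  triples of points.  For R = A (x) A (x) A the triple of canonical inclusions evaluates every
  tensor to itself, so the braid relation for r at this triple is the braid equation for c.

  A (x) A (x) A is modelled by functionals on trilinear forms, which avoids a quotient type.
*)
theory Submission
  imports Defs "HOL-Library.Function_Algebras" "HOL-Algebra.Group"
begin

section \<open>Separating tensors by multilinear forms\<close>

lemma vector_space_field: "vector_space ((*) :: 'k::field \<Rightarrow> 'k \<Rightarrow> 'k)"
  by unfold_locales (simp_all add: algebra_simps)

lemma lin_fun_iff:
  assumes "vector_space sc"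
  shows "lin_fun sc f \<longleftrightarrow> (\<forall>x y. f (x + y) = f x + f y) \<and> (\<forall>c x. f (sc c x) = c * f x)"
  using assms vector_space_field unfolding lin_fun_def Vector_Spaces.linear_iff by blast

lemma sum_list_concat_map:
  "sum_list (map F (concat (map G xs))) = (\<Sum>x\<leftarrow>xs. sum_list (map F (G x)))"
  by (induction xs) auto

lemma sum_list_sum_commute:
  "(\<Sum>x\<leftarrow>xs. \<Sum>i\<in>I. g i x) = (\<Sum>i\<in>I. \<Sum>x\<leftarrow>xs. g i x)"
  by (induction xs) (auto simp: sum.distrib)

lemma sum_list_commute:
  "(\<Sum>x\<leftarrow>xs. \<Sum>y\<leftarrow>ys. h x y) = (\<Sum>y\<leftarrow>ys. \<Sum>x\<leftarrow>xs. (h x y :: 'c::comm_monoid_add))"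
  by (induction xs) (auto simp: sum_list_addf)

definition coord :: "('k::field \<Rightarrow> 'a::ab_group_add \<Rightarrow> 'a) \<Rightarrow> 'a \<Rightarrow> 'a \<Rightarrow> 'k" where
  "coord sc b v = module.representation sc (vector_space.extend_basis sc {}) v b"

context
  fixes sc :: "'k::field \<Rightarrow> 'a::ab_group_add \<Rightarrow> 'a"
  assumes vs: "vector_space sc"
begin

interpretation vector_space sc by (rule vs)

lemma lin_fun_coord: "lin_fun sc (coord sc b)"
  unfolding lin_fun_def coord_def
  by (intro linear_representation independent_extend_basis span_extend_basis independent_empty)

lemma finite_coord_support: "finite {b. coord sc b v \<noteq> 0}"
  unfolding coord_def by (rule finite_representation)

lemma coord_expansion:
  assumes "finite F" "{b. coord sc b v \<noteq> 0} \<subseteq> F"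
  shows "v = (\<Sum>b\<in>F. sc (coord sc b v) b)"
proof -
  have "(\<Sum>b\<in>F. sc (coord sc b v) b) = (\<Sum>b | coord sc b v \<noteq> 0. sc (coord sc b v) b)"
    by (rule sum.mono_neutral_right) (use assms in auto)
  also have "\<dots> = v" unfolding coord_def
    by (rule sum_nonzero_representation_eq)
       (simp_all add: independent_extend_basis span_extend_basis independent_empty)
  finally show ?thesis by simp
qed

lemma lin_fun_coord_expansion:
  assumes f: "lin_fun sc f" and "finite F" "{b. coord sc b v \<noteq> 0} \<subseteq> F"
  shows "f v = (\<Sum>b\<in>F. coord sc b v * f b)"
proof -
  interpret f: linear sc "(*)" f using f unfolding lin_fun_def .
  have "f v = f (\<Sum>b\<in>F. sc (coord sc b v) b)"
    using coord_expansion assms(2,3) by metis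
  then show ?thesis by (simp add: f.sum f.scale)
qed

text \<open>Expanding both arguments in coordinates reduces a bilinear form to the products
  \<open>coord sc i a * coord sc j b\<close>, on which \<open>eq2\<close> is the hypothesis.\<close>

lemma eq2_sum_bilinear:
  assumes eq: "eq2 sc t u"
    and lin1: "\<And>b. lin_fun sc (\<lambda>a. B a b)" and lin2: "\<And>a. lin_fun sc (B a)"
  shows "(\<Sum>(a,b)\<leftarrow>t. B a b) = (\<Sum>(a,b)\<leftarrow>u. B a b)"
proof -
  define F where "F = (\<Union>v \<in> fst ` set (t @ u) \<union> snd ` set (t @ u). {i. coord sc i v \<noteq> 0})"
  have fin: "finite F" unfolding F_def by (auto intro: finite_coord_support)
  have expand: "B a b = (\<Sum>i\<in>F. \<Sum>j\<in>F. (coord sc i a * coord sc j b) * B i j)"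
    if "(a, b) \<in> set (t @ u)" for a b
  proof -
    have supp: "{i. coord sc i a \<noteq> 0} \<subseteq> F" "{i. coord sc i b \<noteq> 0} \<subseteq> F"
      using that unfolding F_def by force+
    have "B a b = (\<Sum>i\<in>F. coord sc i a * B i b)"
      by (rule lin_fun_coord_expansion[OF lin1 fin supp(1)])
    also have "\<dots> = (\<Sum>i\<in>F. coord sc i a * (\<Sum>j\<in>F. coord sc j b * B i j))"
      by (simp add: lin_fun_coord_expansion[OF lin2 fin supp(2)])
    finally show ?thesis by (simp add: sum_distrib_left ac_simps)
  qed
  have "(\<Sum>(a,b)\<leftarrow>w. B a b) = (\<Sum>i\<in>F. \<Sum>j\<in>F. (\<Sum>(a,b)\<leftarrow>w. coord sc i a * coord sc j b) * B i j)"
    if "set w \<subseteq> set (t @ u)" for w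
  proof -
    have "(\<Sum>(a,b)\<leftarrow>w. B a b) = (\<Sum>(a,b)\<leftarrow>w. \<Sum>i\<in>F. \<Sum>j\<in>F. (coord sc i a * coord sc j b) * B i j)"
      using that expand by (intro arg_cong[where f=sum_list] map_cong) auto
    then show ?thesis by (simp add: split_def sum_list_sum_commute sum_list_mult_const)
  qed
  then show ?thesis
    using eq lin_fun_coord unfolding eq2_def by simp
qed

lemma eq3_sum_trilinear:
  assumes eq: "eq3 sc t u"
    and lin1: "\<And>b c. lin_fun sc (\<lambda>a. M a b c)" and lin2: "\<And>a c. lin_fun sc (\<lambda>b. M a b c)"
    and lin3: "\<And>a b. lin_fun sc (M a b)"
  shows "(\<Sum>(a,b,c)\<leftarrow>t. M a b c) = (\<Sum>(a,b,c)\<leftarrow>u. M a b c)"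
proof -
  define W where "W = fst ` set (t @ u) \<union> (fst \<circ> snd) ` set (t @ u) \<union> (snd \<circ> snd) ` set (t @ u)"
  define F where "F = (\<Union>v \<in> W. {i. coord sc i v \<noteq> 0})"
  have fin: "finite F" unfolding F_def W_def by (auto intro: finite_coord_support)
  have expand:
    "M a b c = (\<Sum>i\<in>F. \<Sum>j\<in>F. \<Sum>l\<in>F. (coord sc i a * coord sc j b * coord sc l c) * M i j l)"
    if "(a, b, c) \<in> set (t @ u)" for a b c
  proof -
    have supp: "{i. coord sc i a \<noteq> 0} \<subseteq> F" "{i. coord sc i b \<noteq> 0} \<subseteq> F"
      "{i. coord sc i c \<noteq> 0} \<subseteq> F"
      using that unfolding F_def W_def by force+
    have "M a b c = (\<Sum>i\<in>F. coord sc i a * M i b c)"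
      by (rule lin_fun_coord_expansion[OF lin1 fin supp(1)])
    also have "\<dots> = (\<Sum>i\<in>F. coord sc i a * (\<Sum>j\<in>F. coord sc j b * M i j c))"
      by (simp add: lin_fun_coord_expansion[OF lin2 fin supp(2)])
    also have "\<dots> = (\<Sum>i\<in>F. coord sc i a * (\<Sum>j\<in>F. coord sc j b * (\<Sum>l\<in>F. coord sc l c * M i j l)))"
      by (simp add: lin_fun_coord_expansion[OF lin3 fin supp(3)])
    finally show ?thesis by (simp add: sum_distrib_left ac_simps)
  qed
  have "(\<Sum>(a,b,c)\<leftarrow>w. M a b c) =
      (\<Sum>i\<in>F. \<Sum>j\<in>F. \<Sum>l\<in>F. (\<Sum>(a,b,c)\<leftarrow>w. coord sc i a * coord sc j b * coord sc l c) * M i j l)"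
    if "set w \<subseteq> set (t @ u)" for w
  proof -
    have "(\<Sum>(a,b,c)\<leftarrow>w. M a b c) =
        (\<Sum>(a,b,c)\<leftarrow>w. \<Sum>i\<in>F. \<Sum>j\<in>F. \<Sum>l\<in>F. (coord sc i a * coord sc j b * coord sc l c) * M i j l)"
      using that expand by (intro arg_cong[where f=sum_list] map_cong) auto
    then show ?thesis by (simp add: split_def sum_list_sum_commute sum_list_mult_const)
  qed
  then show ?thesis
    using eq lin_fun_coord unfolding eq3_def by simp
qed

end

section \<open>Skew braces and the braid equation\<close>

text \<open>\<open>A\<close> and \<open>C\<close> are the groups \<open>(G, \<cdot>)\<close> and \<open>(G, \<circ>)\<close> of a skew brace, and \<open>(lam a b, sig a b)\<close>
  is its set-theoretic solution of the braid equation (Guarnieri and Vendramin).\<close>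

locale skew_brace = A: group A + C: group C
  for A :: "('p, 'x) monoid_scheme" and C :: "('p, 'y) monoid_scheme" +
  assumes carrier_eq: "carrier C = carrier A"
    and brace: "\<lbrakk>a \<in> carrier A; b \<in> carrier A; c \<in> carrier A\<rbrakk> \<Longrightarrow>
      a \<otimes>\<^bsub>C\<^esub> (b \<otimes>\<^bsub>A\<^esub> c) = a \<otimes>\<^bsub>C\<^esub> b \<otimes>\<^bsub>A\<^esub> inv\<^bsub>A\<^esub> a \<otimes>\<^bsub>A\<^esub> (a \<otimes>\<^bsub>C\<^esub> c)"
begin

definition lam :: "'p \<Rightarrow> 'p \<Rightarrow> 'p" where
  "lam a b = inv\<^bsub>A\<^esub> a \<otimes>\<^bsub>A\<^esub> (a \<otimes>\<^bsub>C\<^esub> b)"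

definition sig :: "'p \<Rightarrow> 'p \<Rightarrow> 'p" where
  "sig a b = inv\<^bsub>C\<^esub> (lam a b) \<otimes>\<^bsub>C\<^esub> a \<otimes>\<^bsub>C\<^esub> b"

definition r12 :: "'p \<times> 'p \<times> 'p \<Rightarrow> 'p \<times> 'p \<times> 'p" where
  "r12 = (\<lambda>(a, b, c). (lam a b, sig a b, c))"

definition r23 :: "'p \<times> 'p \<times> 'p \<Rightarrow> 'p \<times> 'p \<times> 'p" where
  "r23 = (\<lambda>(a, b, c). (a, lam b c, sig b c))"

lemma circ_closed [simp]: "a \<in> carrier A \<Longrightarrow> b \<in> carrier A \<Longrightarrow> a \<otimes>\<^bsub>C\<^esub> b \<in> carrier A"
  using C.m_closed by (simp add: carrier_eq)

lemma circ_assoc: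
  "\<lbrakk>a \<in> carrier A; b \<in> carrier A; c \<in> carrier A\<rbrakk> \<Longrightarrow> a \<otimes>\<^bsub>C\<^esub> b \<otimes>\<^bsub>C\<^esub> c = a \<otimes>\<^bsub>C\<^esub> (b \<otimes>\<^bsub>C\<^esub> c)"
  using C.m_assoc by (simp add: carrier_eq)

lemma inv_circ_closed [simp]: "a \<in> carrier A \<Longrightarrow> inv\<^bsub>C\<^esub> a \<in> carrier A"
  using C.inv_closed by (simp add: carrier_eq)

lemma circ_cancel_left:
  "\<lbrakk>a \<in> carrier A; b \<in> carrier A; c \<in> carrier A\<rbrakk> \<Longrightarrow> a \<otimes>\<^bsub>C\<^esub> b = a \<otimes>\<^bsub>C\<^esub> c \<longleftrightarrow> b = c"
  using C.Units_l_cancel by (simp add: carrier_eq)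

lemma lam_closed [simp]: "a \<in> carrier A \<Longrightarrow> b \<in> carrier A \<Longrightarrow> lam a b \<in> carrier A"
  unfolding lam_def by simp

lemma sig_closed [simp]: "a \<in> carrier A \<Longrightarrow> b \<in> carrier A \<Longrightarrow> sig a b \<in> carrier A"
  unfolding sig_def by simp

lemma circ_eq_mult_lam: "a \<in> carrier A \<Longrightarrow> b \<in> carrier A \<Longrightarrow> a \<otimes>\<^bsub>C\<^esub> b = a \<otimes>\<^bsub>A\<^esub> lam a b"
  unfolding lam_def by (simp flip: A.m_assoc)

lemma lam_mult:
  "\<lbrakk>a \<in> carrier A; b \<in> carrier A; c \<in> carrier A\<rbrakk> \<Longrightarrow> lam a (b \<otimes>\<^bsub>A\<^esub> c) = lam a b \<otimes>\<^bsub>A\<^esub> lam a c"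
  unfolding lam_def by (simp add: brace A.m_assoc)

lemma lam_lam:
  assumes "a \<in> carrier A" "b \<in> carrier A" "c \<in> carrier A"
  shows "lam a (lam b c) = lam (a \<otimes>\<^bsub>C\<^esub> b) c"
proof -
  have "a \<otimes>\<^bsub>C\<^esub> b \<otimes>\<^bsub>A\<^esub> lam (a \<otimes>\<^bsub>C\<^esub> b) c = a \<otimes>\<^bsub>C\<^esub> (b \<otimes>\<^bsub>C\<^esub> c)"
    using assms by (simp add: circ_assoc circ_eq_mult_lam[of "a \<otimes>\<^bsub>C\<^esub> b" c, symmetric])
  also have "\<dots> = a \<otimes>\<^bsub>A\<^esub> lam a (b \<otimes>\<^bsub>A\<^esub> lam b c)"
    using assms by (simp add: circ_eq_mult_lam)
  also have "\<dots> = a \<otimes>\<^bsub>A\<^esub> lam a b \<otimes>\<^bsub>A\<^esub> lam a (lam b c)"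
    using assms by (simp add: lam_mult A.m_assoc)
  also have "\<dots> = a \<otimes>\<^bsub>C\<^esub> b \<otimes>\<^bsub>A\<^esub> lam a (lam b c)"
    using assms by (simp add: circ_eq_mult_lam[of a b])
  finally show ?thesis using assms by simp
qed

lemma lam_circ_sig: "a \<in> carrier A \<Longrightarrow> b \<in> carrier A \<Longrightarrow> lam a b \<otimes>\<^bsub>C\<^esub> sig a b = a \<otimes>\<^bsub>C\<^esub> b"
  unfolding sig_def by (simp add: carrier_eq flip: C.m_assoc)

lemma lam_circ_lam_sig:
  assumes "a \<in> carrier A" "b \<in> carrier A" "c \<in> carrier A"
  shows "lam a b \<otimes>\<^bsub>C\<^esub> lam (sig a b) c = lam a (b \<otimes>\<^bsub>C\<^esub> c)"
proof -
  have "lam a b \<otimes>\<^bsub>C\<^esub> lam (sig a b) c = lam a b \<otimes>\<^bsub>A\<^esub> lam (lam a b \<otimes>\<^bsub>C\<^esub> sig a b) c"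
    using assms by (simp add: circ_eq_mult_lam[of "lam a b"] lam_lam)
  also have "\<dots> = lam a (b \<otimes>\<^bsub>A\<^esub> lam b c)"
    using assms by (simp add: lam_circ_sig lam_mult lam_lam)
  finally show ?thesis
    using assms by (simp add: circ_eq_mult_lam[of b c])
qed

lemma r12_closed:
  "P \<in> carrier A \<times> carrier A \<times> carrier A \<Longrightarrow> r12 P \<in> carrier A \<times> carrier A \<times> carrier A"
  unfolding r12_def by auto

lemma r23_closed:
  "P \<in> carrier A \<times> carrier A \<times> carrier A \<Longrightarrow> r23 P \<in> carrier A \<times> carrier A \<times> carrier A"
  unfolding r23_def by auto

theorem braid:
  assumes a: "a \<in> carrier A" and b: "b \<in> carrier A" and c: "c \<in> carrier A"
  shows "r12 (r23 (r12 (a, b, c))) = r23 (r12 (r23 (a, b, c)))"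
proof -
  txt \<open>The first components agree; as \<open>r\<close> preserves \<open>\<circ>\<close>-products, so do the \<open>\<circ>\<close>-products of
    the first two and of all three components, and left cancellation in \<open>C\<close> gives the rest.\<close>
  define a1 b1 where "a1 = lam a b" and "b1 = sig a b"
  define b2 c2 where "b2 = lam b1 c" and "c2 = sig b1 c"
  define b' c' where "b' = lam b c" and "c' = sig b c"
  define a' b'' where "a' = lam a b'" and "b'' = sig a b'"
  have closed: "a1 \<in> carrier A" "b1 \<in> carrier A" "b2 \<in> carrier A" "c2 \<in> carrier A"
    "b' \<in> carrier A" "c' \<in> carrier A" "a' \<in> carrier A" "b'' \<in> carrier A"
    using a b c by (simp_all add: a1_def b1_def b2_def c2_def b'_def c'_def a'_def b''_def)
  have first: "lam a1 b2 = a'"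
    using a b c by (simp add: a1_def b1_def b2_def a'_def b'_def lam_lam lam_circ_sig)
  have "a' \<otimes>\<^bsub>C\<^esub> sig a1 b2 = a1 \<otimes>\<^bsub>C\<^esub> b2"
    using closed by (simp add: lam_circ_sig flip: first)
  also have "\<dots> = lam a (b \<otimes>\<^bsub>C\<^esub> c)"
    using a b c by (simp add: a1_def b1_def b2_def lam_circ_lam_sig)
  also have "\<dots> = a' \<otimes>\<^bsub>C\<^esub> lam b'' c'"
    using a b c by (simp add: a'_def b''_def c'_def b'_def lam_circ_lam_sig lam_circ_sig)
  finally have second: "sig a1 b2 = lam b'' c'"
    using closed by (simp add: circ_cancel_left)
  have "a' \<otimes>\<^bsub>C\<^esub> lam b'' c' \<otimes>\<^bsub>C\<^esub> c2 = a1 \<otimes>\<^bsub>C\<^esub> (b1 \<otimes>\<^bsub>C\<^esub> c)"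
    using closed a b c
    by (simp add: lam_circ_sig circ_assoc b2_def c2_def flip: first second)
  also have "\<dots> = a \<otimes>\<^bsub>C\<^esub> (b \<otimes>\<^bsub>C\<^esub> c)"
    using a b c by (simp add: a1_def b1_def lam_circ_sig flip: circ_assoc)
  also have "\<dots> = a \<otimes>\<^bsub>C\<^esub> b' \<otimes>\<^bsub>C\<^esub> c'"
    using a b c by (simp add: b'_def c'_def lam_circ_sig circ_assoc)
  also have "\<dots> = a' \<otimes>\<^bsub>C\<^esub> b'' \<otimes>\<^bsub>C\<^esub> c'"
    using a closed by (simp add: a'_def b''_def lam_circ_sig)
  also have "\<dots> = a' \<otimes>\<^bsub>C\<^esub> lam b'' c' \<otimes>\<^bsub>C\<^esub> sig b'' c'"
    using closed by (simp add: circ_assoc lam_circ_sig)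
  finally have third: "c2 = sig b'' c'"
    using closed by (simp add: circ_cancel_left)
  show ?thesis
    using first second third
    by (simp add: r12_def r23_def a1_def b1_def b2_def c2_def a'_def b''_def b'_def c'_def)
qed

end

section \<open>The algebra \<open>A \<otimes> A \<otimes> A\<close>\<close>

type_synonym ('a, 'k) cube = "('a \<Rightarrow> 'a \<Rightarrow> 'a \<Rightarrow> 'k) \<Rightarrow> 'k"

locale tensor_cube =
  fixes sc :: "'k::field \<Rightarrow> 'a::comm_ring_1 \<Rightarrow> 'a"
  assumes k_alg: "k_algebra sc"
begin

lemma vector_space_sc: "vector_space sc"
  using k_alg unfolding k_algebra_def by simp

lemma scale_mult_left: "sc c (x * y) = sc c x * y"
  using k_alg unfolding k_algebra_def by simp

lemma scale_mult_right: "sc c (x * y) = x * sc c y"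
  using scale_mult_left[of c y x] by (simp add: mult.commute)

lemma lin_funI:
  "(\<And>x y. f (x + y) = f x + f y) \<Longrightarrow> (\<And>c x. f (sc c x) = c * f x) \<Longrightarrow> lin_fun sc f"
  using lin_fun_iff[OF vector_space_sc] by blast

lemma lin_fun_add: "lin_fun sc f \<Longrightarrow> f (x + y) = f x + f y"
  using lin_fun_iff[OF vector_space_sc] by blast

lemma lin_fun_scale: "lin_fun sc f \<Longrightarrow> f (sc c x) = c * f x"
  using lin_fun_iff[OF vector_space_sc] by blast

lemma lin_fun_mult_left: "lin_fun sc f \<Longrightarrow> lin_fun sc (\<lambda>x. f (a * x))"
  by (rule lin_funI) (simp_all add: lin_fun_add lin_fun_scale distrib_left flip: scale_mult_right)

lemma lin_fun_mult_right: "lin_fun sc f \<Longrightarrow> lin_fun sc (\<lambda>x. f (x * a))"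
  by (rule lin_funI) (simp_all add: lin_fun_add lin_fun_scale distrib_right flip: scale_mult_left)

lemma lin_fun_const_mult: "lin_fun sc f \<Longrightarrow> lin_fun sc (\<lambda>x. c * f x)"
  by (rule lin_funI) (simp_all add: lin_fun_add lin_fun_scale distrib_left)

lemma lin_fun_sum_list:
  "(\<And>i. i \<in> set l \<Longrightarrow> lin_fun sc (F i)) \<Longrightarrow> lin_fun sc (\<lambda>x. \<Sum>i\<leftarrow>l. F i x)"
proof (induction l)
  case Nil
  show ?case by (rule lin_funI) simp_all
next
  case (Cons a l)
  then have IH: "lin_fun sc (\<lambda>x. \<Sum>i\<leftarrow>l. F i x)" and Fa: "lin_fun sc (F a)" by simp_all
  show ?case
    by (intro lin_funI) (simp_all add: lin_fun_add[OF IH] lin_fun_scale[OF IH]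
        lin_fun_add[OF Fa] lin_fun_scale[OF Fa] distrib_left)
qed

definition trilinear :: "('a \<Rightarrow> 'a \<Rightarrow> 'a \<Rightarrow> 'k) \<Rightarrow> bool" where
  "trilinear M \<longleftrightarrow> (\<forall>b c. lin_fun sc (\<lambda>a. M a b c)) \<and> (\<forall>a c. lin_fun sc (\<lambda>b. M a b c))
     \<and> (\<forall>a b. lin_fun sc (M a b))"

lemma trilinear_lin_fun:
  assumes "trilinear M"
  shows "lin_fun sc (\<lambda>a. M a b c)" "lin_fun sc (\<lambda>b. M a b c)" "lin_fun sc (\<lambda>c. M a b c)"
  using assms unfolding trilinear_def by blast+

text \<open>A tensor is the functional it induces on trilinear forms.  Its value \<open>0\<close> on all other
  arguments makes \<open>tensor\<close> respect the relations of \<open>A \<otimes> A \<otimes> A\<close> (such as \<open>cscale_tensor\<close>),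
  and by \<open>eq3_if_tensor_eq\<close> the functional determines the class of \<open>t\<close>.\<close>
definition tensor :: "'a tens3 \<Rightarrow> ('a, 'k) cube" where
  "tensor t = (\<lambda>M. if trilinear M then \<Sum>(a,b,c)\<leftarrow>t. M a b c else 0)"

definition tmult :: "'a tens3 \<Rightarrow> 'a tens3 \<Rightarrow> 'a tens3" where
  "tmult t u = [(a * a', b * b', c * c'). (a,b,c) \<leftarrow> t, (a',b',c') \<leftarrow> u]"

lemma trilinear_mult: "trilinear M \<Longrightarrow> trilinear (\<lambda>a' b' c'. M (a * a') (b * b') (c * c'))"
  unfolding trilinear_def by (auto intro: lin_fun_mult_left)

lemma sum_tmult:
  "sum_list (map G (tmult t u)) =
    (\<Sum>x\<leftarrow>t. \<Sum>y\<leftarrow>u. G (fst x * fst y, fst (snd x) * fst (snd y), snd (snd x) * snd (snd y)))"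
  unfolding tmult_def by (simp add: sum_list_concat_map split_def o_def)

lemma tensor_tmult:
  assumes M: "trilinear M"
  shows "tensor (tmult t u) M =
    tensor t (\<lambda>a b c. tensor u (\<lambda>a' b' c'. M (a * a') (b * b') (c * c')))"
proof -
  have "trilinear (\<lambda>a b c. \<Sum>(a',b',c')\<leftarrow>u. M (a * a') (b * b') (c * c'))"
    using M unfolding trilinear_def split_def by (auto intro!: lin_fun_sum_list lin_fun_mult_right)
  then show ?thesis
    using M trilinear_mult[OF M] by (simp add: tensor_def sum_tmult split_def)
qed

lemma tensor_tmult_cong:
  assumes "tensor t = tensor t'" "tensor u = tensor u'"
  shows "tensor (tmult t u) = tensor (tmult t' u')"
proof
  fix M
  show "tensor (tmult t u) M = tensor (tmult t' u') M"
  proof (cases "trilinear M")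
    case True
    then show ?thesis by (simp add: tensor_tmult assms)
  qed (simp add: tensor_def)
qed

lemma tensor_tmult_commute: "tensor (tmult t u) = tensor (tmult u t)"
  unfolding tensor_def
  by (rule ext, simp only: sum_tmult, subst sum_list_commute, simp add: mult.commute)

lemma tensor_tmult_assoc: "tensor (tmult (tmult t u) v) = tensor (tmult t (tmult u v))"
  unfolding tensor_def by (rule ext, simp only: sum_tmult, simp add: mult.assoc)

lemma tmult_append: "tmult (t @ t') u = tmult t u @ tmult t' u"
  unfolding tmult_def by simp

lemma tensor_append: "tensor (t @ u) = tensor t + tensor u"
  unfolding tensor_def by (rule ext) simp

lemma tensor_Nil: "tensor [] = 0"
  unfolding tensor_def by (rule ext) simp

definition Cube :: "('a, 'k) cube set" where
  "Cube = range tensor"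

definition rep :: "('a, 'k) cube \<Rightarrow> 'a tens3" where
  "rep \<Phi> = (SOME t. tensor t = \<Phi>)"

text \<open>Only meaningful on \<open>Cube\<close>, where it does not depend on the choice of representatives
  (\<open>tensor_tmult_cong\<close>).\<close>

definition cmult :: "('a, 'k) cube \<Rightarrow> ('a, 'k) cube \<Rightarrow> ('a, 'k) cube"  (infixl \<open>\<odot>\<close> 70) where
  "\<Phi> \<odot> \<Psi> = tensor (tmult (rep \<Phi>) (rep \<Psi>))"

definition cone :: "('a, 'k) cube" where
  "cone = tensor [(1, 1, 1)]"

definition cscale :: "'k \<Rightarrow> ('a, 'k) cube \<Rightarrow> ('a, 'k) cube" where
  "cscale c \<Phi> = (\<lambda>M. c * \<Phi> M)"

lemma tensor_in_Cube [simp]: "tensor t \<in> Cube"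
  unfolding Cube_def by simp

lemma tensor_rep: "\<Phi> \<in> Cube \<Longrightarrow> tensor (rep \<Phi>) = \<Phi>"
  unfolding Cube_def rep_def by (auto intro: someI)

lemma CubeE:
  assumes "\<Phi> \<in> Cube"
  obtains t where "\<Phi> = tensor t"
  using assms unfolding Cube_def by auto

lemma cmult_tensor [simp]: "tensor t \<odot> tensor u = tensor (tmult t u)"
  unfolding cmult_def by (rule tensor_tmult_cong) (simp_all add: tensor_rep)

lemma cmult_in_Cube [simp]: "\<Phi> \<odot> \<Psi> \<in> Cube"
  unfolding cmult_def by simp

lemma zero_in_Cube [simp]: "0 \<in> Cube"
  using tensor_in_Cube[of "[]"] by (simp add: tensor_Nil)

lemma add_in_Cube [simp]: "\<Phi> \<in> Cube \<Longrightarrow> \<Psi> \<in> Cube \<Longrightarrow> \<Phi> + \<Psi> \<in> Cube"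
  by (elim CubeE) (simp flip: tensor_append)

lemma cone_in_Cube [simp]: "cone \<in> Cube"
  unfolding cone_def by simp

lemma sum_list_in_Cube [simp]: "(\<And>i. i \<in> set l \<Longrightarrow> F i \<in> Cube) \<Longrightarrow> (\<Sum>i\<leftarrow>l. F i) \<in> Cube"
  by (induction l) auto

lemma cscale_tensor: "cscale c (tensor t) = tensor (map (\<lambda>(a,b,d). (sc c a, b, d)) t)"
proof
  fix M
  show "cscale c (tensor t) M = tensor (map (\<lambda>(a,b,d). (sc c a, b, d)) t) M"
  proof (cases "trilinear M")
    case True
    then have "M (sc c a) b d = c * M a b d" for a b d
      unfolding trilinear_def using lin_fun_scale by blast
    then show ?thesis
      using True unfolding cscale_def tensor_def by (simp add: split_def o_def sum_list_const_mult)
  qed (simp add: cscale_def tensor_def)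
qed

lemma cscale_in_Cube [simp]: "\<Phi> \<in> Cube \<Longrightarrow> cscale c \<Phi> \<in> Cube"
  by (elim CubeE) (simp add: cscale_tensor)

lemma cmult_commute: "\<Phi> \<odot> \<Psi> = \<Psi> \<odot> \<Phi>"
  unfolding cmult_def by (rule tensor_tmult_commute)

lemma cmult_assoc: "\<Phi> \<odot> \<Psi> \<odot> X = \<Phi> \<odot> (\<Psi> \<odot> X)"
proof -
  have "\<Phi> \<odot> \<Psi> \<odot> X = tensor (tmult (tmult (rep \<Phi>) (rep \<Psi>)) (rep X))"
    unfolding cmult_def[of "\<Phi> \<odot> \<Psi>"] by (rule tensor_tmult_cong) (simp_all add: tensor_rep cmult_def)
  also have "\<dots> = tensor (tmult (rep \<Phi>) (tmult (rep \<Psi>) (rep X)))"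
    by (rule tensor_tmult_assoc)
  also have "\<dots> = \<Phi> \<odot> (\<Psi> \<odot> X)"
    unfolding cmult_def[of \<Phi>] by (rule tensor_tmult_cong) (simp_all add: tensor_rep cmult_def)
  finally show ?thesis .
qed

lemma cmult_left_commute: "\<Phi> \<odot> (\<Psi> \<odot> X) = \<Psi> \<odot> (\<Phi> \<odot> X)"
  by (metis cmult_assoc cmult_commute)

lemmas cmult_ac = cmult_assoc cmult_commute cmult_left_commute

lemma cmult_rep_right: "\<Phi> \<odot> X = \<Phi> \<odot> tensor (rep X)"
  unfolding cmult_def by (rule tensor_tmult_cong) (simp_all add: tensor_rep)

lemma cmult_add_left:
  assumes "\<Phi> \<in> Cube" "\<Psi> \<in> Cube"
  shows "(\<Phi> + \<Psi>) \<odot> X = \<Phi> \<odot> X + \<Psi> \<odot> X"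
  using assms by (elim CubeE) (simp add: cmult_rep_right[of _ X] tmult_append tensor_append
      flip: tensor_append)

lemma cmult_add_right: "\<Phi> \<in> Cube \<Longrightarrow> \<Psi> \<in> Cube \<Longrightarrow> X \<odot> (\<Phi> + \<Psi>) = X \<odot> \<Phi> + X \<odot> \<Psi>"
  by (simp add: cmult_commute[of X] cmult_add_left)

lemma zero_cmult: "0 \<odot> X = 0"
  by (simp add: cmult_rep_right[of _ X] tmult_def tensor_Nil flip: tensor_Nil)

lemma cmult_sum_left:
  "(\<And>i. i \<in> set l \<Longrightarrow> F i \<in> Cube) \<Longrightarrow> (\<Sum>i\<leftarrow>l. F i) \<odot> Y = (\<Sum>i\<leftarrow>l. F i \<odot> Y)"
  by (induction l) (simp_all add: cmult_add_left zero_cmult)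

lemma cmult_sum_right:
  "(\<And>i. i \<in> set l \<Longrightarrow> F i \<in> Cube) \<Longrightarrow> Y \<odot> (\<Sum>i\<leftarrow>l. F i) = (\<Sum>i\<leftarrow>l. Y \<odot> F i)"
  by (simp add: cmult_commute[of Y] cmult_sum_left)

lemma cone_cmult: "\<Phi> \<in> Cube \<Longrightarrow> cone \<odot> \<Phi> = \<Phi>"
proof (elim CubeE)
  fix t assume "\<Phi> = tensor t"
  moreover have "tmult [(1, 1, 1)] t = t"
    unfolding tmult_def by (induction t) auto
  ultimately show ?thesis unfolding cone_def by simp
qed

lemma cmult_cone: "\<Phi> \<in> Cube \<Longrightarrow> \<Phi> \<odot> cone = \<Phi>"
  by (simp add: cmult_commute[of \<Phi>] cone_cmult)

lemma cscale_cmult: "\<Phi> \<in> Cube \<Longrightarrow> cscale c \<Phi> \<odot> X = cscale c (\<Phi> \<odot> X)"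
proof (elim CubeE)
  fix t assume "\<Phi> = tensor t"
  moreover have
    "tmult (map (\<lambda>(a,b,d). (sc c a, b, d)) t) u = map (\<lambda>(a,b,d). (sc c a, b, d)) (tmult t u)" for u
    unfolding tmult_def by (simp add: map_concat o_def split_def scale_mult_left)
  ultimately show ?thesis
    by (simp add: cscale_tensor cmult_rep_right[of _ X])
qed

lemma cmult_cscale: "\<Phi> \<in> Cube \<Longrightarrow> X \<odot> cscale c \<Phi> = cscale c (X \<odot> \<Phi>)"
  by (simp add: cmult_commute[of X] cscale_cmult)

lemma cscale_sum_list: "cscale c (\<Sum>i\<leftarrow>l. F i) = (\<Sum>i\<leftarrow>l. cscale c (F i))"
  by (induction l) (auto simp: cscale_def fun_eq_iff distrib_left)

lemma cscale_add_scalar: "cscale (a + b) \<Phi> = cscale a \<Phi> + cscale b \<Phi>"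
  by (auto simp: cscale_def fun_eq_iff distrib_right)

lemma cscale_cscale: "cscale a (cscale b \<Phi>) = cscale (a * b) \<Phi>"
  by (auto simp: cscale_def fun_eq_iff mult.assoc)

definition clinear :: "('a \<Rightarrow> ('a, 'k) cube) \<Rightarrow> bool" where
  "clinear f \<longleftrightarrow>
    (\<forall>x. f x \<in> Cube) \<and> (\<forall>x y. f (x + y) = f x + f y) \<and> (\<forall>c x. f (sc c x) = cscale c (f x))"

lemma clinearI:
  "(\<And>x. f x \<in> Cube) \<Longrightarrow> (\<And>x y. f (x + y) = f x + f y) \<Longrightarrow> (\<And>c x. f (sc c x) = cscale c (f x))
    \<Longrightarrow> clinear f"
  unfolding clinear_def by blast

lemma clinear_in_Cube: "clinear f \<Longrightarrow> f x \<in> Cube"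
  unfolding clinear_def by blast

lemma clinear_add: "clinear f \<Longrightarrow> f (x + y) = f x + f y"
  unfolding clinear_def by blast

lemma clinear_scale: "clinear f \<Longrightarrow> f (sc c x) = cscale c (f x)"
  unfolding clinear_def by blast

lemma clinear_sum_list: assumes f: "clinear f" shows "f (\<Sum>i\<leftarrow>l. g i) = (\<Sum>i\<leftarrow>l. f (g i))"
proof (induction l)
  case Nil
  show ?case using clinear_add[OF f, of 0 0] by simp
qed (simp add: clinear_add[OF f])

lemma clinear_cmult_left: assumes f: "clinear f" shows "clinear (\<lambda>x. f x \<odot> Y)"
  by (rule clinearI)
     (simp_all add: clinear_add[OF f] clinear_scale[OF f] clinear_in_Cube[OF f]
        cmult_add_left cscale_cmult)

lemma clinear_cmult_right: assumes f: "clinear f" shows "clinear (\<lambda>x. Y \<odot> f x)"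
  by (rule clinearI)
     (simp_all add: clinear_add[OF f] clinear_scale[OF f] clinear_in_Cube[OF f]
        cmult_add_right cmult_cscale)

lemma clinear_sum_prod:
  assumes F: "\<And>a b. clinear (F a b)" shows "clinear (\<lambda>x. \<Sum>(a,b)\<leftarrow>l. F a b x)"
  by (rule clinearI) (simp_all add: clinear_in_Cube[OF F] clinear_add[OF F] clinear_scale[OF F]
      split_def sum_list_addf cscale_sum_list)

lemma clinear_mult_left: assumes f: "clinear f" shows "clinear (\<lambda>x. f (a * x))"
  by (rule clinearI) (simp_all add: clinear_in_Cube[OF f] clinear_add[OF f] clinear_scale[OF f]
      distrib_left flip: scale_mult_right)

lemma clinear_mult_right: assumes f: "clinear f" shows "clinear (\<lambda>x. f (x * a))"
  by (rule clinearI) (simp_all add: clinear_in_Cube[OF f] clinear_add[OF f] clinear_scale[OF f]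
      distrib_right flip: scale_mult_left)

lemma clinear_compose:
  assumes f: "clinear f" and S: "Vector_Spaces.linear sc sc S"
  shows "clinear (\<lambda>x. f (S x))"
proof -
  have "S (x + y) = S x + S y" "S (sc c x) = sc c (S x)" for x y c
    using S vector_space_sc by (simp_all add: Vector_Spaces.linear_iff)
  then show ?thesis
    by (intro clinearI) (simp_all add: clinear_in_Cube[OF f] clinear_add[OF f] clinear_scale[OF f])
qed

lemma lin_fun_eval: assumes f: "clinear f" shows "lin_fun sc (\<lambda>x. f x M)"
  by (rule lin_funI) (simp_all add: clinear_add[OF f] clinear_scale[OF f] cscale_def)

lemma sum_list_apply: "(\<Sum>x\<leftarrow>xs. F x) M = (\<Sum>x\<leftarrow>xs. F x M)"
  by (induction xs) simp_all

lemma eq2_sum_clinear: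
  assumes "eq2 sc t u" and "\<And>q. clinear (\<lambda>p. F p q)" and "\<And>p. clinear (F p)"
  shows "(\<Sum>(p,q)\<leftarrow>t. F p q) = (\<Sum>(p,q)\<leftarrow>u. F p q)"
proof
  fix M
  show "(\<Sum>(p,q)\<leftarrow>t. F p q) M = (\<Sum>(p,q)\<leftarrow>u. F p q) M"
    using eq2_sum_bilinear[OF vector_space_sc assms(1), of "\<lambda>p q. F p q M"]
      lin_fun_eval[OF assms(2)] lin_fun_eval[OF assms(3)]
    by (simp add: sum_list_apply split_def)
qed

lemma eq3_sum_clinear:
  assumes "eq3 sc t u" and "\<And>q r. clinear (\<lambda>p. F p q r)" and "\<And>p r. clinear (\<lambda>q. F p q r)"
    and "\<And>p q. clinear (F p q)"
  shows "(\<Sum>(p,q,r)\<leftarrow>t. F p q r) = (\<Sum>(p,q,r)\<leftarrow>u. F p q r)"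
proof
  fix M
  show "(\<Sum>(p,q,r)\<leftarrow>t. F p q r) M = (\<Sum>(p,q,r)\<leftarrow>u. F p q r) M"
    using eq3_sum_trilinear[OF vector_space_sc assms(1), of "\<lambda>p q r. F p q r M"]
      lin_fun_eval[OF assms(2)] lin_fun_eval[OF assms(3)] lin_fun_eval[OF assms(4)]
    by (simp add: sum_list_apply split_def)
qed

lemma tensor_single_apply: "tensor [(a, b, c)] M = (if trilinear M then M a b c else 0)"
  by (simp add: tensor_def)

lemma clinear_tensor_single:
  "clinear (\<lambda>a. tensor [(a, b, c)])" "clinear (\<lambda>b. tensor [(a, b, c)])"
  "clinear (\<lambda>c. tensor [(a, b, c)])"
  unfolding clinear_def
  by (auto simp: fun_eq_iff tensor_single_apply cscale_def lin_fun_add[OF trilinear_lin_fun(1)]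
      lin_fun_scale[OF trilinear_lin_fun(1)] lin_fun_add[OF trilinear_lin_fun(2)]
      lin_fun_scale[OF trilinear_lin_fun(2)] lin_fun_add[OF trilinear_lin_fun(3)]
      lin_fun_scale[OF trilinear_lin_fun(3)])

lemma sum_list_tensor_single: "(\<Sum>(a, b, c)\<leftarrow>t. tensor [(a, b, c)]) = tensor t"
proof (induction t)
  case (Cons x t)
  have "tensor (x # t) = tensor [x] + tensor t"
    using tensor_append[of "[x]" t] by simp
  then show ?case using Cons by (cases x) simp
qed (simp add: tensor_Nil)

lemma eq3_if_tensor_eq: "tensor t = tensor u \<Longrightarrow> eq3 sc t u"
  unfolding eq3_def
proof (intro allI impI)
  fix f g h
  assume "tensor t = tensor u" and f: "lin_fun sc f" and g: "lin_fun sc g" and h: "lin_fun sc h"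
  moreover have "lin_fun sc (\<lambda>a. f a * g b * h c)" "lin_fun sc (\<lambda>b. f a * g b * h c)"
    "lin_fun sc (\<lambda>c. f a * g b * h c)" for a b c
    using lin_fun_const_mult[OF f, of "g b * h c"] lin_fun_const_mult[OF g, of "f a * h c"]
      lin_fun_const_mult[OF h, of "f a * g b"] by (simp_all add: ac_simps)
  then have "trilinear (\<lambda>a b c. f a * g b * h c)"
    unfolding trilinear_def by blast
  ultimately show "(\<Sum>(a, b, c)\<leftarrow>t. f a * g b * h c) = (\<Sum>(a, b, c)\<leftarrow>u. f a * g b * h c)"
    unfolding tensor_def by meson
qed

definition point :: "('a \<Rightarrow> ('a, 'k) cube) \<Rightarrow> bool" where
  "point f \<longleftrightarrow> clinear f \<and> (\<forall>x y. f (x * y) = f x \<odot> f y) \<and> f 1 = cone"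

abbreviation Points :: "('a \<Rightarrow> ('a, 'k) cube) set" where
  "Points \<equiv> {f. point f}"

lemma point_clinear: "point f \<Longrightarrow> clinear f"
  unfolding point_def by blast

lemma point_mult: "point f \<Longrightarrow> f (x * y) = f x \<odot> f y"
  unfolding point_def by blast

lemma point_one: "point f \<Longrightarrow> f 1 = cone"
  unfolding point_def by blast

lemma point_in_Cube [simp]: "point f \<Longrightarrow> f x \<in> Cube"
  unfolding point_def by (blast intro: clinear_in_Cube)

definition eval3 :: "('a \<Rightarrow> ('a, 'k) cube) \<times> ('a \<Rightarrow> ('a, 'k) cube)
    \<times> ('a \<Rightarrow> ('a, 'k) cube) \<Rightarrow> 'a tens3 \<Rightarrow> ('a, 'k) cube" where
  "eval3 = (\<lambda>(f, g, h) t. \<Sum>(a, b, c)\<leftarrow>t. f a \<odot> g b \<odot> h c)"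

definition incl_points :: "('a \<Rightarrow> ('a, 'k) cube) \<times> ('a \<Rightarrow> ('a, 'k) cube)
    \<times> ('a \<Rightarrow> ('a, 'k) cube)" where
  "incl_points = (\<lambda>a. tensor [(a, 1, 1)], \<lambda>b. tensor [(1, b, 1)], \<lambda>c. tensor [(1, 1, c)])"

lemma incl_points_in_Points: "incl_points \<in> Points \<times> Points \<times> Points"
  unfolding incl_points_def point_def using clinear_tensor_single
  by (simp add: tmult_def cone_def)

lemma eval3_incl_points: "eval3 incl_points t = tensor t"
  by (simp add: eval3_def incl_points_def tmult_def sum_list_tensor_single)

end

section \<open>Points of a Hopf algebra\<close>

locale hopf_points = tensor_cube sc for sc :: "'k::field \<Rightarrow> 'a::comm_ring_1 \<Rightarrow> 'a" +
  fixes D :: "'a \<Rightarrow> 'a tens2" and e :: "'a \<Rightarrow> 'k" and S :: "'a \<Rightarrow> 'a"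
  assumes hopf: "hopf_algebra sc D e S"
begin

lemma
  shows comult_add: "eq2 sc (D (x + y)) (D x @ D y)"
    and comult_scale: "eq2 sc (D (sc c x)) [(sc c a, b). (a, b) \<leftarrow> D x]"
    and coassoc: "eq3 sc [(a1, a2, b). (a, b) \<leftarrow> D x, (a1, a2) \<leftarrow> D a]
                         [(a, b1, b2). (a, b) \<leftarrow> D x, (b1, b2) \<leftarrow> D b]"
    and counit_lin_fun: "lin_fun sc e"
    and counit_left: "(\<Sum>(a, b)\<leftarrow>D x. sc (e a) b) = x"
    and counit_right: "(\<Sum>(a, b)\<leftarrow>D x. sc (e b) a) = x"
    and comult_mult: "eq2 sc (D (x * y)) [(a * c, b * d). (a, b) \<leftarrow> D x, (c, d) \<leftarrow> D y]"
    and comult_one: "eq2 sc (D 1) [(1, 1)]"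
    and counit_mult: "e (x * y) = e x * e y"
    and counit_one: "e 1 = 1"
    and antipode_linear: "Vector_Spaces.linear sc sc S"
    and antipode_left: "(\<Sum>(a, b)\<leftarrow>D x. S a * b) = sc (e x) 1"
    and antipode_right: "(\<Sum>(a, b)\<leftarrow>D x. a * S b) = sc (e x) 1"
  using hopf unfolding hopf_algebra_def by blast+

definition conv :: "('a \<Rightarrow> ('a, 'k) cube) \<Rightarrow> ('a \<Rightarrow> ('a, 'k) cube) \<Rightarrow> 'a \<Rightarrow> ('a, 'k) cube" where
  "conv f g = (\<lambda>x. \<Sum>(p, q)\<leftarrow>D x. f p \<odot> g q)"

definition conv_unit :: "'a \<Rightarrow> ('a, 'k) cube" where
  "conv_unit = (\<lambda>x. cscale (e x) cone)"

lemma clinear_conv: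
  assumes f: "clinear f" and g: "clinear g"
  shows "clinear (conv f g)"
proof (rule clinearI)
  have bil: "clinear (\<lambda>p. f p \<odot> g q)" "clinear (\<lambda>q. f p \<odot> g q)" for p q
    using f g by (simp_all add: clinear_cmult_left clinear_cmult_right)
  show "conv f g (x + y) = conv f g x + conv f g y" for x y
    unfolding conv_def by (subst eq2_sum_clinear[OF comult_add]) (simp_all add: bil)
  show "conv f g (sc c x) = cscale c (conv f g x)" for c x
    unfolding conv_def
    by (subst eq2_sum_clinear[OF comult_scale])
       (simp_all add: bil o_def split_def clinear_scale[OF f] clinear_in_Cube[OF f]
        cscale_cmult cscale_sum_list)
qed (simp add: conv_def split_def)

lemma point_conv:
  assumes f: "point f" and g: "point g"
  shows "point (conv f g)"
proof -
  have bil: "clinear (\<lambda>p. f p \<odot> g q)" "clinear (\<lambda>q. f p \<odot> g q)" for p q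
    using f g by (simp_all add: point_clinear clinear_cmult_left clinear_cmult_right)
  have "conv f g (x * y) = (\<Sum>(a, b)\<leftarrow>D x. \<Sum>(c, d)\<leftarrow>D y. f (a * c) \<odot> g (b * d))" for x y
    unfolding conv_def
    by (subst eq2_sum_clinear[OF comult_mult])
       (simp_all add: bil sum_list_concat_map o_def split_def)
  also have "\<dots> x y = (\<Sum>(a, b)\<leftarrow>D x. \<Sum>(c, d)\<leftarrow>D y. (f a \<odot> g b) \<odot> (f c \<odot> g d))" for x y
    by (simp add: point_mult[OF f] point_mult[OF g] cmult_ac)
  also have "\<dots> x y = conv f g x \<odot> conv f g y" for x y
    unfolding conv_def by (simp add: cmult_sum_left split_def, simp add: cmult_sum_right)
  moreover have "conv f g 1 = cone"
    unfolding conv_def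
    by (subst eq2_sum_clinear[OF comult_one]) (simp_all add: bil point_one f g cone_cmult)
  ultimately show ?thesis
    unfolding point_def using clinear_conv f g point_clinear by simp
qed

lemma point_conv_unit: "point conv_unit"
proof -
  have "clinear conv_unit" unfolding conv_unit_def
    by (rule clinearI) (simp_all add: lin_fun_add[OF counit_lin_fun]
        lin_fun_scale[OF counit_lin_fun] cscale_add_scalar cscale_cscale)
  moreover have "conv_unit (x * y) = conv_unit x \<odot> conv_unit y" for x y
    unfolding conv_unit_def
    by (simp add: counit_mult cscale_cmult cmult_cscale cscale_cscale cone_cmult mult.commute)
  ultimately show ?thesis
    unfolding point_def by (simp add: conv_unit_def counit_one cscale_def)
qed

lemma conv_unit_left: assumes f: "clinear f" shows "conv conv_unit f = f"
proof
  fix x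
  have "conv conv_unit f x = (\<Sum>(a, b)\<leftarrow>D x. f (sc (e a) b))"
    unfolding conv_def conv_unit_def
    by (simp add: cscale_cmult cone_cmult clinear_in_Cube[OF f] clinear_scale[OF f] split_def)
  also have "\<dots> = f x"
    by (simp add: clinear_sum_list[OF f, symmetric] split_def counit_left[unfolded split_def])
  finally show "conv conv_unit f x = f x" .
qed

lemma sum_coassoc:
  assumes "\<And>q r. clinear (\<lambda>p. G p q r)" "\<And>p r. clinear (\<lambda>q. G p q r)" "\<And>p q. clinear (G p q)"
  shows "(\<Sum>(a, b)\<leftarrow>D x. \<Sum>(a1, a2)\<leftarrow>D a. G a1 a2 b) = (\<Sum>(a, b)\<leftarrow>D x. \<Sum>(b1, b2)\<leftarrow>D b. G a b1 b2)"
  using eq3_sum_clinear[OF coassoc assms] by (simp add: sum_list_concat_map o_def split_def)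

lemma conv_assoc:
  assumes f: "clinear f" and g: "clinear g" and h: "clinear h"
  shows "conv (conv f g) h = conv f (conv g h)"
proof
  fix x
  have "conv (conv f g) h x = (\<Sum>(a, b)\<leftarrow>D x. \<Sum>(a1, a2)\<leftarrow>D a. f a1 \<odot> g a2 \<odot> h b)"
    unfolding conv_def
    by (simp add: split_def cmult_sum_left clinear_in_Cube[OF f] clinear_in_Cube[OF g])
  also have "\<dots> = (\<Sum>(a, b)\<leftarrow>D x. \<Sum>(b1, b2)\<leftarrow>D b. f a \<odot> g b1 \<odot> h b2)"
    using f g h by (intro sum_coassoc) (simp_all add: clinear_cmult_left clinear_cmult_right)
  also have "\<dots> = conv f (conv g h) x"
    unfolding conv_def
    by (simp add: split_def cmult_sum_right clinear_in_Cube[OF g] clinear_in_Cube[OF h] cmult_assoc)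
  finally show "conv (conv f g) h x = conv f (conv g h) x" .
qed

lemma conv_antipode_left: assumes f: "point f" shows "conv (\<lambda>x. f (S x)) f = conv_unit"
proof
  fix x
  have "conv (\<lambda>x. f (S x)) f x = f (\<Sum>(a, b)\<leftarrow>D x. S a * b)"
    unfolding conv_def by (simp add: point_mult[OF f] clinear_sum_list[OF point_clinear[OF f]]
        split_def)
  then show "conv (\<lambda>x. f (S x)) f x = conv_unit x"
    by (simp add: antipode_left conv_unit_def clinear_scale[OF point_clinear[OF f]] point_one[OF f])
qed

lemma conv_antipode_right: assumes f: "point f" shows "conv f (\<lambda>x. f (S x)) = conv_unit"
proof
  fix x
  have "conv f (\<lambda>x. f (S x)) x = f (\<Sum>(a, b)\<leftarrow>D x. a * S b)"
    unfolding conv_def by (simp add: point_mult[OF f] clinear_sum_list[OF point_clinear[OF f]]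
        split_def)
  then show "conv f (\<lambda>x. f (S x)) x = conv_unit x"
    by (simp add: antipode_right conv_unit_def clinear_scale[OF point_clinear[OF f]]
        point_one[OF f])
qed

definition cbilinear :: "('a \<Rightarrow> 'a \<Rightarrow> ('a, 'k) cube) \<Rightarrow> bool" where
  "cbilinear B \<longleftrightarrow> (\<forall>y. clinear (\<lambda>x. B x y)) \<and> (\<forall>x. clinear (B x))"

definition conv2 :: "('a \<Rightarrow> 'a \<Rightarrow> ('a, 'k) cube) \<Rightarrow> ('a \<Rightarrow> 'a \<Rightarrow> ('a, 'k) cube)
    \<Rightarrow> 'a \<Rightarrow> 'a \<Rightarrow> ('a, 'k) cube" where
  "conv2 B B' = (\<lambda>x y. \<Sum>(x1, x2)\<leftarrow>D x. \<Sum>(y1, y2)\<leftarrow>D y. B x1 y1 \<odot> B' x2 y2)"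

definition conv2_unit :: "'a \<Rightarrow> 'a \<Rightarrow> ('a, 'k) cube" where
  "conv2_unit = (\<lambda>x y. cscale (e x * e y) cone)"

lemma cbilinear_left: "cbilinear B \<Longrightarrow> clinear (\<lambda>x. B x y)"
  unfolding cbilinear_def by blast

lemma cbilinear_right: "cbilinear B \<Longrightarrow> clinear (B x)"
  unfolding cbilinear_def by blast

lemma cbilinear_in_Cube: "cbilinear B \<Longrightarrow> B x y \<in> Cube"
  unfolding cbilinear_def by (blast intro: clinear_in_Cube)

lemma conv2_unit_right: assumes B: "cbilinear B" shows "conv2 B conv2_unit = B"
proof (rule ext, rule ext)
  fix x y
  have "conv2 B conv2_unit x y =
      (\<Sum>(x1, x2)\<leftarrow>D x. cscale (e x2) (\<Sum>(y1, y2)\<leftarrow>D y. B x1 (sc (e y2) y1)))"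
    unfolding conv2_def conv2_unit_def
    by (simp add: cmult_cscale cmult_cone cbilinear_in_Cube[OF B] split_def cscale_sum_list
        cscale_cscale clinear_scale[OF cbilinear_right[OF B]] mult.commute)
  also have "\<dots> = (\<Sum>(x1, x2)\<leftarrow>D x. (\<lambda>u. B u y) (sc (e x2) x1))"
    by (simp add: clinear_sum_list[OF cbilinear_right[OF B], symmetric] split_def
        counit_right[unfolded split_def] clinear_scale[OF cbilinear_left[OF B]])
  also have "\<dots> = B x y"
    by (simp add: clinear_sum_list[OF cbilinear_left[OF B], symmetric] split_def
        counit_right[unfolded split_def])
  finally show "conv2 B conv2_unit x y = B x y" .
qed

lemma conv2_unit_left: assumes B: "cbilinear B" shows "conv2 conv2_unit B = B"
proof (rule ext, rule ext)
  fix x y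
  have "conv2 conv2_unit B x y =
      (\<Sum>(x1, x2)\<leftarrow>D x. cscale (e x1) (\<Sum>(y1, y2)\<leftarrow>D y. B x2 (sc (e y1) y2)))"
    unfolding conv2_def conv2_unit_def
    by (simp add: cscale_cmult cone_cmult cbilinear_in_Cube[OF B] split_def cscale_sum_list
        cscale_cscale clinear_scale[OF cbilinear_right[OF B]] mult.commute)
  also have "\<dots> = (\<Sum>(x1, x2)\<leftarrow>D x. (\<lambda>u. B u y) (sc (e x1) x2))"
    by (simp add: clinear_sum_list[OF cbilinear_right[OF B], symmetric] split_def
        counit_left[unfolded split_def] clinear_scale[OF cbilinear_left[OF B]])
  also have "\<dots> = B x y"
    by (simp add: clinear_sum_list[OF cbilinear_left[OF B], symmetric] split_def
        counit_left[unfolded split_def])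
  finally show "conv2 conv2_unit B x y = B x y" .
qed

lemma conv2_assoc:
  assumes B: "cbilinear B" and B': "cbilinear B'" and B'': "cbilinear B''"
  shows "conv2 (conv2 B B') B'' = conv2 B (conv2 B' B'')"
proof (rule ext, rule ext)
  fix x y
  note lin = clinear_sum_prod clinear_cmult_left clinear_cmult_right cbilinear_left
      cbilinear_right B B' B''
  have "conv2 (conv2 B B') B'' x y = (\<Sum>(x1, x2)\<leftarrow>D x. \<Sum>(u1, u2)\<leftarrow>D x1. \<Sum>(y1, y2)\<leftarrow>D y. \<Sum>(v1, v2)\<leftarrow>D y1.
      B u1 v1 \<odot> B' u2 v2 \<odot> B'' x2 y2)"
    unfolding conv2_def
    by (simp add: cmult_sum_left split_def cbilinear_in_Cube B B')
       (rule arg_cong[where f=sum_list], rule map_cong[OF refl], rule sum_list_commute)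
  also have "\<dots> = (\<Sum>(x1, x2)\<leftarrow>D x. \<Sum>(w1, w2)\<leftarrow>D x2. \<Sum>(y1, y2)\<leftarrow>D y. \<Sum>(v1, v2)\<leftarrow>D y1.
      B x1 v1 \<odot> B' w1 v2 \<odot> B'' w2 y2)"
    by (rule sum_coassoc) (intro lin)+
  also have "\<dots> = (\<Sum>(x1, x2)\<leftarrow>D x. \<Sum>(w1, w2)\<leftarrow>D x2. \<Sum>(y1, y2)\<leftarrow>D y. \<Sum>(z1, z2)\<leftarrow>D y2.
      B x1 y1 \<odot> B' w1 z1 \<odot> B'' w2 z2)"
  proof -
    have "(\<Sum>(y1, y2)\<leftarrow>D y. \<Sum>(v1, v2)\<leftarrow>D y1. B p v1 \<odot> B' q v2 \<odot> B'' r y2) =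
        (\<Sum>(y1, y2)\<leftarrow>D y. \<Sum>(z1, z2)\<leftarrow>D y2. B p y1 \<odot> B' q z1 \<odot> B'' r z2)" for p q r
      by (rule sum_coassoc) (intro lin)+
    then show ?thesis by simp
  qed
  also have "\<dots> = conv2 B (conv2 B' B'') x y"
    unfolding conv2_def
    by (simp add: cmult_sum_right split_def cmult_assoc cbilinear_in_Cube B' B'')
       (rule arg_cong[where f=sum_list], rule map_cong[OF refl], rule sum_list_commute)
  finally show "conv2 (conv2 B B') B'' x y = conv2 B (conv2 B' B'') x y" .
qed

lemma clinear_antipode: "clinear f \<Longrightarrow> clinear (\<lambda>x. f (S x))"
  by (rule clinear_compose[OF _ antipode_linear])

lemma conv2_antipode_mult:
  assumes f: "point f"
  shows "conv2 (\<lambda>x y. f (S (x * y))) (\<lambda>x y. f (x * y)) = conv2_unit"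
proof (rule ext, rule ext)
  fix x y
  have lin: "clinear f" "clinear (\<lambda>x. f (S x))"
    using f by (simp_all add: point_clinear clinear_antipode)
  have "conv2 (\<lambda>x y. f (S (x * y))) (\<lambda>x y. f (x * y)) x y = (\<Sum>(p, q)\<leftarrow>D (x * y). f (S p) \<odot> f q)"
    unfolding conv2_def
    by (subst eq2_sum_clinear[OF comult_mult])
       (simp_all add: lin clinear_cmult_left clinear_cmult_right sum_list_concat_map o_def
        split_def)
  also have "\<dots> = conv_unit (x * y)"
    using conv_antipode_left[OF f] unfolding conv_def by metis
  finally show "conv2 (\<lambda>x y. f (S (x * y))) (\<lambda>x y. f (x * y)) x y = conv2_unit x y"
    by (simp add: conv_unit_def conv2_unit_def counit_mult)
qed

lemma conv2_mult_antipode: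
  assumes f: "point f"
  shows "conv2 (\<lambda>x y. f (x * y)) (\<lambda>x y. f (S x) \<odot> f (S y)) = conv2_unit"
proof (rule ext, rule ext)
  fix x y
  have "conv2 (\<lambda>x y. f (x * y)) (\<lambda>x y. f (S x) \<odot> f (S y)) x y =
      (\<Sum>(x1, x2)\<leftarrow>D x. \<Sum>(y1, y2)\<leftarrow>D y. (f x1 \<odot> f (S x2)) \<odot> (f y1 \<odot> f (S y2)))"
    unfolding conv2_def by (simp add: point_mult[OF f] cmult_ac)
  also have "\<dots> = conv f (\<lambda>x. f (S x)) x \<odot> conv f (\<lambda>x. f (S x)) y"
    unfolding conv_def using f by (simp add: cmult_sum_left split_def, simp add: cmult_sum_right)
  finally show "conv2 (\<lambda>x y. f (x * y)) (\<lambda>x y. f (S x) \<odot> f (S y)) x y = conv2_unit x y"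
    by (simp add: conv_antipode_right[OF f] conv_unit_def conv2_unit_def cscale_cmult cmult_cscale
        cscale_cscale cone_cmult mult.commute)
qed

lemma antipode_one: assumes f: "point f" shows "f (S 1) = cone"
proof -
  have lin: "clinear f" "clinear (\<lambda>x. f (S x))"
    using f by (simp_all add: point_clinear clinear_antipode)
  have "conv (\<lambda>x. f (S x)) f 1 = f (S 1) \<odot> f 1"
    unfolding conv_def
    by (subst eq2_sum_clinear[OF comult_one])
       (simp_all add: lin clinear_cmult_left clinear_cmult_right)
  then show ?thesis
    using f by (simp add: conv_antipode_left conv_unit_def counit_one point_one cmult_cone
        cscale_def)
qed

lemma point_antipode:
  assumes f: "point f"
  shows "point (\<lambda>x. f (S x))"
proof -
  txt \<open>\<open>P\<close> and \<open>Q\<close> are a left and a right inverse of \<open>F\<close> for \<open>conv2\<close>, hence equal.\<close>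
  define P where "P = (\<lambda>x y. f (S (x * y)))"
  define F where "F = (\<lambda>x y. f (x * y))"
  define Q where "Q = (\<lambda>x y. f (S x) \<odot> f (S y))"
  have lin: "clinear f" "clinear (\<lambda>x. f (S x))"
    using f by (simp_all add: point_clinear clinear_antipode)
  have bilinear: "cbilinear P" "cbilinear F" "cbilinear Q"
    unfolding cbilinear_def P_def F_def Q_def
    using clinear_mult_left[OF lin(1)] clinear_mult_right[OF lin(1)] clinear_cmult_left[OF lin(2)]
      clinear_cmult_right[OF lin(2)] clinear_mult_left[OF lin(2)] clinear_mult_right[OF lin(2)]
    by (auto simp: mult.commute)
  have "P = conv2 P (conv2 F Q)"
    using conv2_mult_antipode[OF f] conv2_unit_right[OF bilinear(1)] by (simp add: F_def Q_def)
  also have "\<dots> = conv2 (conv2 P F) Q"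
    using bilinear by (simp add: conv2_assoc)
  also have "\<dots> = Q"
    using conv2_antipode_mult[OF f] conv2_unit_left[OF bilinear(3)] by (simp add: P_def F_def)
  finally have "f (S (x * y)) = f (S x) \<odot> f (S y)" for x y
    unfolding P_def Q_def by metis
  then show ?thesis
    unfolding point_def using lin(2) antipode_one[OF f] by blast
qed

definition points_group :: "('a \<Rightarrow> ('a, 'k) cube) monoid" where
  "points_group = \<lparr>carrier = Points, mult = conv, one = conv_unit\<rparr>"

lemma points_group_simps [simp]:
  "carrier points_group = Points" "f \<otimes>\<^bsub>points_group\<^esub> g = conv f g"
  "\<one>\<^bsub>points_group\<^esub> = conv_unit"
  by (simp_all add: points_group_def)

lemma group_points_group: "group points_group"
proof (rule groupI)
  show "\<exists>g\<in>carrier points_group. g \<otimes>\<^bsub>points_group\<^esub> f = \<one>\<^bsub>points_group\<^esub>"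
    if "f \<in> carrier points_group" for f
    using that by (auto intro!: bexI[of _ "\<lambda>x. f (S x)"] point_antipode conv_antipode_left)
qed (simp_all add: point_conv point_conv_unit conv_assoc conv_unit_left point_clinear)

lemma inv_points_group: "point f \<Longrightarrow> inv\<^bsub>points_group\<^esub> f = (\<lambda>x. f (S x))"
  by (rule group.inv_equality[OF group_points_group])
     (simp_all add: conv_antipode_left point_antipode)

end

section \<open>Points of a Hopf brace\<close>

locale hopf_brace_points = tensor_cube sc for sc :: "'k::field \<Rightarrow> 'a::comm_ring_1 \<Rightarrow> 'a" +
  fixes D :: "'a \<Rightarrow> 'a tens2" and e :: "'a \<Rightarrow> 'k" and S :: "'a \<Rightarrow> 'a"
    and D' :: "'a \<Rightarrow> 'a tens2" and e' :: "'a \<Rightarrow> 'k" and T :: "'a \<Rightarrow> 'a"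
  assumes hopf_brace: "hopf_brace sc D e S D' e' T"
begin

sublocale h1: hopf_points sc D e S
  using hopf_brace by unfold_locales (simp add: hopf_brace_def)

sublocale h2: hopf_points sc D' e' T
  using hopf_brace by unfold_locales (simp add: hopf_brace_def)

lemma brace_compat:
  "eq3 sc [(a, b1, b2). (a, b) \<leftarrow> D' h, (b1, b2) \<leftarrow> D b]
     [(p1 * S q * r1, p2, r2). (u, r) \<leftarrow> D h, (p, q) \<leftarrow> D u, (p1, p2) \<leftarrow> D' p, (r1, r2) \<leftarrow> D' r]"
  using hopf_brace unfolding hopf_brace_def by blast

lemma conv_brace:
  assumes f: "point f" and g: "point g" and k: "point k"
  shows "h2.conv f (h1.conv g k) = h1.conv (h1.conv (h2.conv f g) (\<lambda>x. f (S x))) (h2.conv f k)"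
proof
  fix x
  have lin: "clinear f" "clinear g" "clinear k"
    using f g k by (simp_all add: point_clinear)
  have "h2.conv f (h1.conv g k) x = (\<Sum>(a, b1, b2)\<leftarrow>[(a, b1, b2). (a, b) \<leftarrow> D' x, (b1, b2) \<leftarrow> D b].
      f a \<odot> (g b1 \<odot> k b2))"
    unfolding h1.conv_def h2.conv_def
    by (simp add: sum_list_concat_map o_def split_def cmult_sum_right clinear_in_Cube lin)
  also have "\<dots> = (\<Sum>(a, b1, b2)\<leftarrow>[(p1 * S q * r1, p2, r2). (u, r) \<leftarrow> D x, (p, q) \<leftarrow> D u,
      (p1, p2) \<leftarrow> D' p, (r1, r2) \<leftarrow> D' r]. f a \<odot> (g b1 \<odot> k b2))"
    by (rule eq3_sum_clinear[OF brace_compat]) (intro clinear_cmult_left clinear_cmult_right lin)+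
  also have "\<dots> = h1.conv (h1.conv (h2.conv f g) (\<lambda>x. f (S x))) (h2.conv f k) x"
    unfolding h1.conv_def h2.conv_def
    by (simp add: sum_list_concat_map o_def split_def point_mult[OF f])
       (simp add: cmult_sum_left, simp add: cmult_sum_right, simp add: cmult_ac)
  finally show "h2.conv f (h1.conv g k) x =
      h1.conv (h1.conv (h2.conv f g) (\<lambda>x. f (S x))) (h2.conv f k) x" .
qed

sublocale points: skew_brace h1.points_group h2.points_group
  by (rule skew_brace.intro[OF h1.group_points_group h2.group_points_group], unfold_locales)
     (simp_all add: h1.inv_points_group conv_brace h1.point_conv h2.point_conv)

lemma lam_points: "point f \<Longrightarrow> points.lam f g = h1.conv (\<lambda>x. f (S x)) (h2.conv f g)"
  by (simp add: points.lam_def h1.inv_points_group)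

lemma sig_points:
  "point f \<Longrightarrow> point g \<Longrightarrow> points.sig f g = h2.conv (h2.conv (\<lambda>x. points.lam f g (T x)) f) g"
  using points.lam_closed[of f g] by (simp add: points.sig_def h2.inv_points_group)

lemma brace_rho_eval:
  assumes f: "point f"
  shows "(\<Sum>(m, n)\<leftarrow>brace_rho D S D' x. f m \<odot> g n) = points.lam f g x"
  unfolding brace_rho_def lam_points[OF f] h1.conv_def h2.conv_def
  by (simp add: sum_list_concat_map o_def split_def point_mult[OF f] cmult_sum_right cmult_assoc)

lemma brace_phi_eval:
  assumes f: "point f" and g: "point g"
  shows "(\<Sum>(m, n)\<leftarrow>brace_phi D S D' T y. f m \<odot> g n) = points.sig f g y"
  unfolding brace_phi_def sig_points[OF f g] h2.conv_def brace_rho_eval[OF f, symmetric]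
  by (simp add: sum_list_concat_map o_def split_def point_mult[OF f] point_mult[OF g])
     (simp add: cmult_sum_left, simp add: cmult_ac)

lemma brace_c_eval:
  assumes f: "point f" and g: "point g"
  shows "(\<Sum>(a, b)\<leftarrow>brace_c D S D' T x y. f a \<odot> g b) = points.lam f g x \<odot> points.sig f g y"
  unfolding brace_c_def brace_rho_eval[OF f, symmetric] brace_phi_eval[OF f g, symmetric]
  by (simp add: sum_list_concat_map o_def split_def point_mult[OF f] point_mult[OF g])
     (simp add: cmult_sum_left, simp add: cmult_sum_right, simp add: cmult_ac)

lemma eval3_c_id:
  assumes "P \<in> Points \<times> Points \<times> Points"
  shows "eval3 P (c_id (brace_c D S D' T) t) = eval3 (points.r12 P) t"
  using assms unfolding eval3_def c_id_def points.r12_def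
  by (auto simp: sum_list_concat_map o_def split_def brace_c_eval[symmetric] cmult_sum_left)

lemma eval3_id_c:
  assumes "P \<in> Points \<times> Points \<times> Points"
  shows "eval3 P (id_c (brace_c D S D' T) t) = eval3 (points.r23 P) t"
  using assms unfolding eval3_def id_c_def points.r23_def
  by (auto simp: sum_list_concat_map o_def split_def cmult_assoc brace_c_eval[symmetric]
      cmult_sum_right)

lemma braid_relation:
  "eq3 sc (c_id (brace_c D S D' T) (id_c (brace_c D S D' T) (c_id (brace_c D S D' T) t)))
     (id_c (brace_c D S D' T) (c_id (brace_c D S D' T) (id_c (brace_c D S D' T) t)))"
proof (rule eq3_if_tensor_eq)
  let ?c = "brace_c D S D' T"
  have closed: "points.r12 P \<in> Points \<times> Points \<times> Points"
    "points.r23 P \<in> Points \<times> Points \<times> Points"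
    if "P \<in> Points \<times> Points \<times> Points" for P
    using that points.r12_closed points.r23_closed by simp_all
  have "tensor (c_id ?c (id_c ?c (c_id ?c t))) =
      eval3 (points.r12 (points.r23 (points.r12 incl_points))) t"
    by (simp add: eval3_c_id eval3_id_c closed incl_points_in_Points flip: eval3_incl_points)
  also have "points.r12 (points.r23 (points.r12 incl_points)) =
      points.r23 (points.r12 (points.r23 incl_points))"
    using incl_points_in_Points by (auto simp: points.braid)
  also have "eval3 \<dots> t = tensor (id_c ?c (c_id ?c (id_c ?c t)))"
    by (simp add: eval3_c_id eval3_id_c closed incl_points_in_Points flip: eval3_incl_points)
  finally show "tensor (c_id ?c (id_c ?c (c_id ?c t))) = tensor (id_c ?c (c_id ?c (id_c ?c t)))" .
qed

end

theorem proposition2p9: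
  fixes sc :: "'k::field \<Rightarrow> 'a::comm_ring_1 \<Rightarrow> 'a"
    and D D' :: "'a \<Rightarrow> ('a \<times> 'a) list"
    and e e' :: "'a \<Rightarrow> 'k"
    and S T :: "'a \<Rightarrow> 'a"
  assumes "hopf_brace sc D e S D' e' T"
  shows "\<forall>x y z. eq3 sc
     (c_id (brace_c D S D' T) (id_c (brace_c D S D' T) (c_id (brace_c D S D' T) [(x, y, z)])))
     (id_c (brace_c D S D' T) (c_id (brace_c D S D' T) (id_c (brace_c D S D' T) [(x, y, z)])))"
proof -
  have "k_algebra sc"
    using assms unfolding hopf_brace_def hopf_algebra_def by blast
  then interpret hopf_brace_points sc D e S D' e' T
    using assms by (intro hopf_brace_points.intro tensor_cube.intro hopf_brace_points_axioms.intro)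
  show ?thesis using braid_relation by blast
qed

end
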